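(* Let $X_1,X_2,\dots$ be iid with $P(X_1>u)=\exp(-\int_0^u h(v)dv)$ for all $u>u_0$, where $u_0\ge0$ and $h$ is a positive, continuous, strictly increasing function with $h(v)\to\infty$. Let $S_k=X_1+\dots+X_k$, $\lambda>0$, $b>0$, $\psi(s)=h^{-1}\big(\tfrac4b\log s\big)$ (defined for $s$ large), $g(k,u)=u-\psi(k)$ and $a_k=\max\{1-2\log k/k,0\}$. Then there exist an index $k_0$ and a constant $C$ such that for all $k>k_0$ and $u>0$, $$\frac{\frac{\lambda^k}{k!}P\big(S_k>u+ba_k,\ S_{k-1}\le g(k,u)\big)}{\frac{\lambda^{k+1}}{(k+1)!}P(S_{k+1}>u+b)}\le\frac{C}{\lambda k}.$$ *)

theory Defs
  imports "HOL-Probability.Probability"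
begin

definition psi_fun :: "(real \<Rightarrow> real) \<Rightarrow> real \<Rightarrow> real \<Rightarrow> real" where
  "psi_fun h b s = inv_into {0..} h (4 / b * ln s)"

definition g_fun :: "(real \<Rightarrow> real) \<Rightarrow> real \<Rightarrow> nat \<Rightarrow> real \<Rightarrow> real" where
  "g_fun h b k u = u - psi_fun h b (real k)"

definition a_seq :: "nat \<Rightarrow> real" where
  "a_seq k = max (1 - 2 * ln (real k) / real k) 0"

end

theory Submission
  imports Defs
begin

(*
  Write S_k for the partial sums and p = psi(k), so that h(p) = (4/b) log k.
  Numerator: on {S_{k-1} <= u - p} the last summand must exceed t + b a_k with t = u - S_{k-1} >= p.
  Since the integrated hazard grows at least at rate h(t) >= h(p) beyond t and a_k >= 1/2,
  P(X > t + b a_k) <= k^(-2) P(X > t); integrating over the law of S_{k-1}, which is independent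
  of the last summand, gives  P(S_k > u + b a_k, S_{k-1} <= u - p) <= P(S_k > u) / k^2.
  Denominator: by independence, P(S_{k+1} > u + b) >= P(X > b) P(S_k > u).
  The Poisson weights have ratio (k+1)/lam <= 2k/lam, so the quotient is at most C / (lam k)
  with C = 2 / P(X > b), as soon as k is large enough for psi(k) > u0 and a_k >= 1/2.
*)

lemma (in prob_space) indep_sum_tail_disintegration:
  fixes Z Y :: "'a \<Rightarrow> real"
  assumes ind: "indep_var borel Z borel Y"
  shows "emeasure M {\<omega>\<in>space M. Y \<omega> \<le> c \<and> Y \<omega> + Z \<omega> > v}
     = (\<integral>\<^sup>+ s. indicator {..c} s * emeasure M {\<omega>\<in>space M. Z \<omega> > v - s} \<partial>distr M borel Y)"
proof -
  have rv[measurable]: "Z \<in> borel_measurable M" "Y \<in> borel_measurable M"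
    using ind indep_var_rv1 indep_var_rv2 by blast+
  let ?LZ = "distr M borel Z" and ?LY = "distr M borel Y"
  interpret Z: prob_space ?LZ by (rule prob_space_distr) (rule rv)
  interpret Y: prob_space ?LY by (rule prob_space_distr) (rule rv)
  interpret P: pair_prob_space ?LZ ?LY ..
  define E where "E = {q \<in> space (borel \<Otimes>\<^sub>M borel). snd q \<le> c \<and> snd q + fst q > v}"
  have E[measurable]: "E \<in> sets (borel \<Otimes>\<^sub>M borel)" unfolding E_def by measurable
  have "emeasure M {\<omega>\<in>space M. Y \<omega> \<le> c \<and> Y \<omega> + Z \<omega> > v}
      = emeasure (distr M (borel \<Otimes>\<^sub>M borel) (\<lambda>x. (Z x, Y x))) E"
    by (subst emeasure_distr[OF _ E]) (auto simp: E_def space_pair_measure intro!: arg_cong[where f="emeasure M"])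
  also have "\<dots> = emeasure (?LZ \<Otimes>\<^sub>M ?LY) E"
    using ind by (simp add: indep_var_distribution_eq)
  also have "\<dots> = (\<integral>\<^sup>+ s. emeasure ?LZ ((\<lambda>x. (x, s)) -` E) \<partial>?LY)"
    by (rule P.emeasure_pair_measure_alt2) simp
  also have "\<dots> = (\<integral>\<^sup>+ s. indicator {..c} s * emeasure M {\<omega>\<in>space M. Z \<omega> > v - s} \<partial>?LY)"
  proof (rule nn_integral_cong)
    fix s :: real
    show "emeasure ?LZ ((\<lambda>x. (x, s)) -` E) = indicator {..c} s * emeasure M {\<omega>\<in>space M. Z \<omega> > v - s}"
    proof (cases "s \<le> c")
      case True
      then have "(\<lambda>x. (x, s)) -` E = {v - s<..}" by (auto simp: E_def space_pair_measure)
      with True show ?thesis by (simp add: emeasure_distr vimage_def Int_def conj_commute)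
    next
      case False
      then have "(\<lambda>x. (x, s)) -` E = {}" by (auto simp: E_def space_pair_measure)
      with False show ?thesis by simp
    qed
  qed
  finally show ?thesis .
qed

lemma (in prob_space) indep_sum_tail_compare:
  fixes Z Y :: "'a \<Rightarrow> real"
  assumes ind: "indep_var borel Z borel Y" and K: "K \<ge> 0"
    and cmp: "\<And>s. s \<le> c \<Longrightarrow> prob {\<omega>\<in>space M. Z \<omega> > u + d - s} \<le> K * prob {\<omega>\<in>space M. Z \<omega> > u - s}"
  shows "prob {\<omega>\<in>space M. Y \<omega> \<le> c \<and> Y \<omega> + Z \<omega> > u + d}
         \<le> K * prob {\<omega>\<in>space M. Y \<omega> \<le> c \<and> Y \<omega> + Z \<omega> > u}"
proof -
  have [measurable]: "Z \<in> borel_measurable M" "Y \<in> borel_measurable M"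
    using ind indep_var_rv1 indep_var_rv2 by blast+
  have "emeasure M {\<omega>\<in>space M. Y \<omega> \<le> c \<and> Y \<omega> + Z \<omega> > u + d}
     \<le> (\<integral>\<^sup>+ s. ennreal K * (indicator {..c} s * emeasure M {\<omega>\<in>space M. Z \<omega> > u - s}) \<partial>distr M borel Y)"
    unfolding indep_sum_tail_disintegration[OF ind]
  proof (rule nn_integral_mono)
    fix s :: real
    show "indicator {..c} s * emeasure M {\<omega>\<in>space M. Z \<omega> > u + d - s}
      \<le> ennreal K * (indicator {..c} s * emeasure M {\<omega>\<in>space M. Z \<omega> > u - s})"
    proof (cases "s \<le> c")
      case True
      then have "ennreal (prob {\<omega>\<in>space M. Z \<omega> > u + d - s})
          \<le> ennreal (K * prob {\<omega>\<in>space M. Z \<omega> > u - s})"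
        using cmp by (simp add: ennreal_leI)
      with True K show ?thesis by (simp add: emeasure_eq_measure ennreal_mult)
    qed simp
  qed
  also have "\<dots> = ennreal K * emeasure M {\<omega>\<in>space M. Y \<omega> \<le> c \<and> Y \<omega> + Z \<omega> > u}"
    unfolding indep_sum_tail_disintegration[OF ind] by (rule nn_integral_cmult) measurable
  finally have "ennreal (prob {\<omega>\<in>space M. Y \<omega> \<le> c \<and> Y \<omega> + Z \<omega> > u + d})
      \<le> ennreal (K * prob {\<omega>\<in>space M. Y \<omega> \<le> c \<and> Y \<omega> + Z \<omega> > u})"
    using K by (simp add: emeasure_eq_measure ennreal_mult)
  then show ?thesis using K by simp
qed

lemma (in prob_space) indep_tail_product:
  fixes Z Y :: "'a \<Rightarrow> real"
  assumes ind: "indep_var borel Z borel Y"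
  shows "prob {\<omega>\<in>space M. Z \<omega> > b \<and> Y \<omega> > u}
       = prob {\<omega>\<in>space M. Z \<omega> > b} * prob {\<omega>\<in>space M. Y \<omega> > u}"
proof -
  have "prob ((\<lambda>x. (Z x, Y x)) -` ({b<..} \<times> {u<..}) \<inter> space M) =
    prob (Z -` {b<..} \<inter> space M) * prob (Y -` {u<..} \<inter> space M)"
    by (rule indep_varD[OF ind]) auto
  then show ?thesis by (simp add: vimage_def Int_def conj_commute)
qed

lemma (in prob_space) partial_sum_tail_compare:
  fixes X :: "nat \<Rightarrow> 'a \<Rightarrow> real"
  assumes meas[measurable]: "\<And>i. X i \<in> borel_measurable M"
    and indep: "indep_vars (\<lambda>_. borel) X UNIV" and k: "1 \<le> k" and K: "K \<ge> 0"
    and cmp: "\<And>s. s \<le> c \<Longrightarrow>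
      prob {\<omega>\<in>space M. X (k-1) \<omega> > u + d - s} \<le> K * prob {\<omega>\<in>space M. X (k-1) \<omega> > u - s}"
  shows "prob {\<omega>\<in>space M. (\<Sum>i<k. X i \<omega>) > u + d \<and> (\<Sum>i<k-1. X i \<omega>) \<le> c}
         \<le> K * prob {\<omega>\<in>space M. (\<Sum>i<k. X i \<omega>) > u}"
proof -
  have ind: "indep_var borel (X (k-1)) borel (\<lambda>\<omega>. \<Sum>i<k-1. X i \<omega>)"
    by (rule indep_vars_sum) (auto intro: indep_vars_subset[OF indep])
  have sum_split: "(\<Sum>i<k. X i \<omega>) = (\<Sum>i<k-1. X i \<omega>) + X (k-1) \<omega>" for \<omega>
    using k by (cases k) simp_all
  have "{\<omega>\<in>space M. (\<Sum>i<k. X i \<omega>) > u + d \<and> (\<Sum>i<k-1. X i \<omega>) \<le> c}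
      = {\<omega>\<in>space M. (\<Sum>i<k-1. X i \<omega>) \<le> c \<and> (\<Sum>i<k-1. X i \<omega>) + X (k-1) \<omega> > u + d}"
    unfolding sum_split by blast
  then have "prob {\<omega>\<in>space M. (\<Sum>i<k. X i \<omega>) > u + d \<and> (\<Sum>i<k-1. X i \<omega>) \<le> c}
      \<le> K * prob {\<omega>\<in>space M. (\<Sum>i<k-1. X i \<omega>) \<le> c \<and> (\<Sum>i<k-1. X i \<omega>) + X (k-1) \<omega> > u}"
    using indep_sum_tail_compare[OF ind K cmp] by (simp only:)
  also have "\<dots> \<le> K * prob {\<omega>\<in>space M. (\<Sum>i<k. X i \<omega>) > u}"
    by (intro mult_left_mono[OF _ K] finite_measure_mono) (fastforce simp: sum_split, measurable)
  finally show ?thesis .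
qed

text \<open>Denominator estimate: S_{k+1} exceeds u + b whenever S_k exceeds u and X_{k+1} exceeds b.\<close>
lemma (in prob_space) partial_sum_tail_lower:
  fixes X :: "nat \<Rightarrow> 'a \<Rightarrow> real"
  assumes meas[measurable]: "\<And>i. X i \<in> borel_measurable M"
    and indep: "indep_vars (\<lambda>_. borel) X UNIV"
  shows "prob {\<omega>\<in>space M. X k \<omega> > b} * prob {\<omega>\<in>space M. (\<Sum>i<k. X i \<omega>) > u}
         \<le> prob {\<omega>\<in>space M. (\<Sum>i<k + 1. X i \<omega>) > u + b}"
proof -
  have ind: "indep_var borel (X k) borel (\<lambda>\<omega>. \<Sum>i<k. X i \<omega>)"
    by (rule indep_vars_sum) (auto intro: indep_vars_subset[OF indep])
  have "prob {\<omega>\<in>space M. X k \<omega> > b} * prob {\<omega>\<in>space M. (\<Sum>i<k. X i \<omega>) > u}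
      = prob {\<omega>\<in>space M. X k \<omega> > b \<and> (\<Sum>i<k. X i \<omega>) > u}"
    by (rule indep_tail_product[OF ind, symmetric])
  also have "\<dots> \<le> prob {\<omega>\<in>space M. (\<Sum>i<k + 1. X i \<omega>) > u + b}"
    by (rule finite_measure_mono) (fastforce, measurable)
  finally show ?thesis .
qed

lemma (in prob_space) identically_distributed_tail:
  fixes Y Z :: "'a \<Rightarrow> real"
  assumes [measurable]: "Y \<in> borel_measurable M" "Z \<in> borel_measurable M"
    and same: "distr M borel Y = distr M borel Z"
  shows "prob {\<omega>\<in>space M. Y \<omega> > t} = prob {\<omega>\<in>space M. Z \<omega> > t}"
proof -
  have "prob {\<omega>\<in>space M. Y \<omega> > t} = measure (distr M borel Y) {t<..}"
    by (subst measure_distr) (auto intro!: arg_cong[where f=prob])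
  also have "\<dots> = measure (distr M borel Z) {t<..}" by (simp only: same)
  also have "\<dots> = prob {\<omega>\<in>space M. Z \<omega> > t}"
    by (subst measure_distr) (auto intro!: arg_cong[where f=prob])
  finally show ?thesis .
qed

lemma integral_increment_lower:
  fixes h :: "real \<Rightarrow> real"
  assumes cont: "continuous_on {0..} h" and mono: "strict_mono_on {0..} h"
    and t: "0 \<le> t" and d: "0 \<le> d"
  shows "integral {0..t} h + d * h t \<le> integral {0..t+d} h"
proof -
  have int: "h integrable_on {0..t+d}"
    by (rule integrable_continuous_interval, rule continuous_on_subset[OF cont]) auto
  have "integral {0..t} h + integral {t..t+d} h = integral {0..t+d} h"
    using Henstock_Kurzweil_Integration.integral_combine[where a=0 and c=t and b="t+d" and f=h] t d int by simp
  moreover have "integral {t..t+d} (\<lambda>_. h t) \<le> integral {t..t+d} h"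
  proof (rule integral_le)
    show "h integrable_on {t..t+d}"
      using int by (rule integrable_on_subinterval) (use t in auto)
    fix x assume "x \<in> {t..t+d}"
    then show "h t \<le> h x"
      using strict_mono_on_leD[OF mono, of t x] t by auto
  qed (intro integrable_continuous_interval continuous_on_const)
  moreover have "integral {t..t+d} (\<lambda>_. h t) = d * h t" using d by simp
  ultimately show ?thesis by linarith
qed

text \<open>A continuous strictly increasing h on [0,oo) tending to infinity attains every value above
  h(0); hence the inverse used in psi is a genuine right inverse there.\<close>
lemma inv_into_increasing_hazard:
  fixes h :: "real \<Rightarrow> real"
  assumes cont: "continuous_on {0..} h" and lim: "filterlim h at_top at_top" and y: "h 0 \<le> y"
  shows "inv_into {0..} h y \<ge> 0 \<and> h (inv_into {0..} h y) = y"
proof -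
  obtain N where N: "\<And>x. x \<ge> N \<Longrightarrow> h x \<ge> y"
    using lim unfolding filterlim_at_top eventually_at_top_linorder by blast
  have "\<exists>x\<ge>0. x \<le> max N 0 \<and> h x = y"
    using IVT'[of h 0 y "max N 0"] y N[of "max N 0"] continuous_on_subset[OF cont, of "{0..max N 0}"]
    by auto
  then have y: "y \<in> h ` {0..}" by auto
  then have "inv_into {0..} h y \<in> {0..}" by (rule inv_into_into)
  with y show ?thesis by (auto intro: f_inv_into_f)
qed

lemma psi_fun_beyond:
  fixes h :: "real \<Rightarrow> real"
  assumes cont: "continuous_on {0..} h" and mono: "strict_mono_on {0..} h"
    and lim: "filterlim h at_top at_top" and u0: "u0 \<ge> 0"
    and large: "h u0 < 4 / b * ln s"
  shows "u0 < psi_fun h b s \<and> h (psi_fun h b s) = 4 / b * ln s"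
proof -
  have "h 0 \<le> h u0" using strict_mono_on_leD[OF mono, of 0 u0] u0 by simp
  then have p: "psi_fun h b s \<ge> 0 \<and> h (psi_fun h b s) = 4 / b * ln s"
    unfolding psi_fun_def using inv_into_increasing_hazard[OF cont lim] large by simp
  have "u0 < psi_fun h b s"
  proof (rule ccontr)
    assume "\<not> u0 < psi_fun h b s"
    then have "h (psi_fun h b s) \<le> h u0"
      using strict_mono_on_leD[OF mono, of "psi_fun h b s" u0] p by simp
    with p large show False by simp
  qed
  with p show ?thesis by simp
qed

lemma eventually_large_index:
  fixes c b :: real assumes b: "b > 0"
  shows "eventually (\<lambda>k::nat. 64 \<le> k \<and> c < 4 / b * ln (real k)) sequentially"
proof -
  have "filterlim (\<lambda>k::nat. ln (real k)) at_top sequentially"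
    by (rule filterlim_compose[OF ln_at_top filterlim_real_sequentially])
  then have "eventually (\<lambda>k::nat. b * c / 4 < ln (real k)) sequentially"
    unfolding filterlim_at_top_dense by (rule spec)
  moreover have "b * c / 4 < ln (real k) \<longleftrightarrow> c < 4 / b * ln (real k)" for k
    using b by (simp add: field_simps)
  ultimately have "eventually (\<lambda>k::nat. c < 4 / b * ln (real k)) sequentially" by simp
  then show ?thesis by (rule eventually_conj[OF eventually_ge_at_top])
qed

lemma a_seq_ge_half:
  fixes k :: nat assumes "k \<ge> 64" shows "a_seq k \<ge> 1/2"
proof -
  have k: "real k \<ge> 64" using assms by simp
  have s8: "sqrt (real k) \<ge> 8" using real_sqrt_le_mono[OF k] by simp
  have "ln (real k) = 2 * ln (sqrt (real k))" using k by (simp add: ln_sqrt)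
  also have "\<dots> \<le> 2 * sqrt (real k)" using ln_le_minus_one[of "sqrt (real k)"] k by simp
  also have "\<dots> \<le> sqrt (real k) * sqrt (real k) / 4" using mult_right_mono[OF s8, of "sqrt (real k)"] by simp
  also have "\<dots> = real k / 4" using k by simp
  finally have "2 * ln (real k) / real k \<le> 1/2" using k by (simp add: divide_simps)
  then show ?thesis unfolding a_seq_def by linarith
qed

lemma hazard_tail_shift:
  fixes h :: "real \<Rightarrow> real"
  assumes cont: "continuous_on {0..} h" and mono: "strict_mono_on {0..} h"
    and p: "0 \<le> p" "p \<le> t" "h p = 4 / b * ln s"
    and s: "1 \<le> s" and b: "b > 0" and a: "a \<ge> 1/2"
  shows "exp (- integral {0..t + b * a} h) \<le> exp (- integral {0..t} h) / s^2"
proof -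
  have ba: "b * a \<ge> 0" using a b by simp
  have "h p \<le> h t" using strict_mono_on_leD[OF mono, of p t] p by simp
  then have "b * a * (4 / b * ln s) \<le> b * a * h t" using p ba by (intro mult_left_mono) auto
  moreover have "2 * ln s \<le> b * a * (4 / b * ln s)"
    using b a s mult_right_mono[of 2 "4*a" "ln s"] by simp
  ultimately have "integral {0..t} h + 2 * ln s \<le> integral {0..t + b * a} h"
    using integral_increment_lower[OF cont mono, of t "b * a"] p ba by linarith
  then have "exp (- integral {0..t + b * a} h) \<le> exp (- integral {0..t} h - real 2 * ln s)" by simp
  also have "\<dots> = exp (- integral {0..t} h) / s^2"
    using s by (simp only: exp_diff exp_of_nat_mult) simp
  finally show ?thesis .
qed

lemma (in prob_space) numerator_bound:
  fixes X :: "nat \<Rightarrow> 'a \<Rightarrow> real" and h :: "real \<Rightarrow> real"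
  assumes meas: "\<And>i. X i \<in> borel_measurable M"
    and indep: "indep_vars (\<lambda>_. borel) X UNIV"
    and tail: "\<And>t. t > u0 \<Longrightarrow> prob {\<omega>\<in>space M. X (k-1) \<omega> > t} = exp (- integral {0..t} h)"
    and u0: "u0 \<ge> 0" and cont: "continuous_on {0..} h" and mono: "strict_mono_on {0..} h"
    and lim: "filterlim h at_top at_top" and b: "b > 0"
    and k: "k \<ge> 64" and large: "h u0 < 4 / b * ln (real k)"
  shows "prob {\<omega>\<in>space M. (\<Sum>i<k. X i \<omega>) > u + b * a_seq k \<and> (\<Sum>i<k-1. X i \<omega>) \<le> g_fun h b k u}
         \<le> 1 / (real k)^2 * prob {\<omega>\<in>space M. (\<Sum>i<k. X i \<omega>) > u}"
proof -
  define p where "p = psi_fun h b (real k)"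
  have p: "u0 < p" "h p = 4 / b * ln (real k)"
    using psi_fun_beyond[OF cont mono lim u0 large] unfolding p_def by auto
  have "prob {\<omega>\<in>space M. X (k-1) \<omega> > u + b * a_seq k - s}
      \<le> 1 / (real k)^2 * prob {\<omega>\<in>space M. X (k-1) \<omega> > u - s}" if "s \<le> u - p" for s
  proof -
    have t: "u0 < u - s" using that p by simp
    have "0 \<le> b * a_seq k" using a_seq_ge_half[OF k] b by simp
    then have "prob {\<omega>\<in>space M. X (k-1) \<omega> > u + b * a_seq k - s}
        = exp (- integral {0..(u - s) + b * a_seq k} h)"
      using tail[of "u - s + b * a_seq k"] t by (simp add: algebra_simps)
    also have "\<dots> \<le> exp (- integral {0..u - s} h) / (real k)^2"
      using k that p u0 by (intro hazard_tail_shift[OF cont mono _ _ p(2) _ b a_seq_ge_half[OF k]]) auto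
    also have "\<dots> = 1 / (real k)^2 * prob {\<omega>\<in>space M. X (k-1) \<omega> > u - s}"
      using tail[OF t] by simp
    finally show ?thesis .
  qed
  then show ?thesis
    unfolding g_fun_def p_def[symmetric]
    by (intro partial_sum_tail_compare[OF meas indep]) (use k in auto)
qed

text \<open>Elementary estimate of the quotient once numerator and denominator are compared with the
  common quantity P(S_k > u); the Poisson weights contribute the factor (k+1)/lam <= 2k/lam.\<close>
lemma poisson_weighted_ratio_bound:
  fixes lam PA PB PS c0 :: real and k :: nat
  assumes lam: "lam > 0" and c0: "c0 > 0" and k: "k \<ge> 1" and PA: "PA \<ge> 0" and PS: "PS \<ge> 0"
    and num: "PA \<le> 1 / (real k)^2 * PS" and den: "c0 * PS \<le> PB"
  shows "(lam^k / fact k * PA) / (lam^(k+1) / fact (k+1) * PB) \<le> (2 / c0) / (lam * real k)"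
proof (cases "PB = 0")
  case True
  then have "PS = 0" using den PS c0 by (metis mult_le_0_iff linorder_not_le order_antisym)
  then have "PA = 0" using num PA by simp
  then show ?thesis using lam c0 by simp
next
  case False
  have "c0 * PS \<ge> 0" using PS c0 by simp
  then have PB: "PB > 0" using False den by linarith
  have kpos: "real k > 0" using k by simp
  have "PA / PB \<le> (PS / (real k)^2) / PB" using num PB by (intro divide_right_mono) auto
  also have "\<dots> \<le> (PB / c0 / (real k)^2) / PB"
    using den c0 PB kpos by (intro divide_right_mono) (auto simp: field_simps)
  also have "\<dots> = 1 / (c0 * (real k)^2)" using PB by (simp add: field_simps)
  finally have ratio: "PA / PB \<le> 1 / (c0 * (real k)^2)" .
  have "(lam^k / fact k * PA) / (lam^(k+1) / fact (k+1) * PB) = (real k + 1) / lam * (PA / PB)"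
    using lam PB by (simp add: field_simps)
  also have "\<dots> \<le> (real k + 1) / lam * (1 / (c0 * (real k)^2))"
    using ratio lam by (intro mult_left_mono) auto
  also have "\<dots> \<le> (2 * real k) / lam * (1 / (c0 * (real k)^2))"
    using lam c0 k by (intro mult_right_mono divide_right_mono) auto
  also have "\<dots> = (2 / c0) / (lam * real k)" using kpos by (simp add: field_simps power2_eq_square)
  finally show ?thesis .
qed

lemma (in prob_space) quotient_bound_at_index:
  fixes X :: "nat \<Rightarrow> 'a \<Rightarrow> real" and h :: "real \<Rightarrow> real"
  assumes meas[measurable]: "\<And>i. X i \<in> borel_measurable M"
    and indep: "indep_vars (\<lambda>_. borel) X UNIV"
    and ident: "\<And>i. distr M borel (X i) = distr M borel (X 0)"
    and tail0: "\<And>t. t > u0 \<Longrightarrow> prob {\<omega>\<in>space M. X 0 \<omega> > t} = exp (- integral {0..t} h)"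
    and u0: "u0 \<ge> 0" and cont: "continuous_on {0..} h" and mono: "strict_mono_on {0..} h"
    and lim: "filterlim h at_top at_top" and lam: "lam > 0" and b: "b > 0"
    and c0: "prob {\<omega>\<in>space M. X 0 \<omega> > b} > 0"
    and k: "k \<ge> 64" and large: "h u0 < 4 / b * ln (real k)"
  shows "(lam ^ k / fact k *
           prob {\<omega>\<in>space M. (\<Sum>i<k. X i \<omega>) > u + b * a_seq k \<and> (\<Sum>i<k - 1. X i \<omega>) \<le> g_fun h b k u})
       / (lam ^ (k + 1) / fact (k + 1) * prob {\<omega>\<in>space M. (\<Sum>i<k + 1. X i \<omega>) > u + b})
       \<le> (2 / prob {\<omega>\<in>space M. X 0 \<omega> > b}) / (lam * real k)"
proof (rule poisson_weighted_ratio_bound[OF lam c0 _ measure_nonneg measure_nonneg])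
  show "1 \<le> k" using k by simp
  have "prob {\<omega>\<in>space M. X (k-1) \<omega> > t} = exp (- integral {0..t} h)" if "t > u0" for t
  proof -
    have "prob {\<omega>\<in>space M. X (k-1) \<omega> > t} = prob {\<omega>\<in>space M. X 0 \<omega> > t}"
      by (rule identically_distributed_tail[OF meas meas ident])
    also have "\<dots> = exp (- integral {0..t} h)" by (rule tail0[OF that])
    finally show ?thesis .
  qed
  then show "prob {\<omega>\<in>space M. (\<Sum>i<k. X i \<omega>) > u + b * a_seq k \<and> (\<Sum>i<k - 1. X i \<omega>) \<le> g_fun h b k u}
      \<le> 1 / (real k)^2 * prob {\<omega>\<in>space M. (\<Sum>i<k. X i \<omega>) > u}"
    by (rule numerator_bound[OF meas indep _ u0 cont mono lim b k large])
  show "prob {\<omega>\<in>space M. X 0 \<omega> > b} * prob {\<omega>\<in>space M. (\<Sum>i<k. X i \<omega>) > u}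
      \<le> prob {\<omega>\<in>space M. (\<Sum>i<k + 1. X i \<omega>) > u + b}"
  proof -
    have "prob {\<omega>\<in>space M. X k \<omega> > b} = prob {\<omega>\<in>space M. X 0 \<omega> > b}"
      by (rule identically_distributed_tail[OF meas meas ident])
    then show ?thesis using partial_sum_tail_lower[OF meas indep, where k=k and b=b and u=u] by simp
  qed
qed

theorem lemma8:
  fixes M :: "'a measure" and X :: "nat \<Rightarrow> 'a \<Rightarrow> real"
    and h :: "real \<Rightarrow> real" and u0 lam b :: real
  assumes "prob_space M"
    and "\<And>i. X i \<in> borel_measurable M"
    and "prob_space.indep_vars M (\<lambda>_. borel) X UNIV"
    and "\<And>i. distr M borel (X i) = distr M borel (X 0)"
    and "u0 \<ge> 0"
    and "\<And>v. v \<ge> 0 \<Longrightarrow> h v > 0"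
    and "continuous_on {0..} h"
    and "strict_mono_on {0..} h"
    and "filterlim h at_top at_top"
    and "\<And>u. u > u0 \<Longrightarrow>
           measure M {\<omega> \<in> space M. X 0 \<omega> > u} = exp (- integral {0..u} h)"
    and "lam > 0" and "b > 0"
  shows "\<exists>(k0::nat) (C::real). \<forall>k u. k > k0 \<longrightarrow> u > 0 \<longrightarrow>
     (lam ^ k / fact k *
        measure M {\<omega> \<in> space M. (\<Sum>i<k. X i \<omega>) > u + b * a_seq k
                                \<and> (\<Sum>i<k - 1. X i \<omega>) \<le> g_fun h b k u})
     / (lam ^ (k + 1) / fact (k + 1) *
        measure M {\<omega> \<in> space M. (\<Sum>i<k + 1. X i \<omega>) > u + b})
     \<le> C / (lam * real k)"
proof -
  interpret prob_space M by (rule assms(1))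
  note [measurable] = assms(2)
  have "0 < prob {\<omega>\<in>space M. X 0 \<omega> > b + u0}" using assms(10)[of "b + u0"] assms(12) by simp
  also have "\<dots> \<le> prob {\<omega>\<in>space M. X 0 \<omega> > b}"
    by (rule finite_measure_mono) (use assms(5) in force, measurable)
  finally have c0: "prob {\<omega>\<in>space M. X 0 \<omega> > b} > 0" .
  obtain k0 where k0: "\<And>k. k \<ge> k0 \<Longrightarrow> 64 \<le> k \<and> h u0 < 4 / b * ln (real k)"
    using eventually_large_index[OF assms(12), of "h u0"] unfolding eventually_sequentially by blast
  show ?thesis
  proof (intro exI allI impI)
    fix k :: nat and u :: real assume "k0 < k"
    then have k: "64 \<le> k" "h u0 < 4 / b * ln (real k)" using k0[of k] by auto
    show "(lam ^ k / fact k *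
        measure M {\<omega> \<in> space M. (\<Sum>i<k. X i \<omega>) > u + b * a_seq k
                                \<and> (\<Sum>i<k - 1. X i \<omega>) \<le> g_fun h b k u})
     / (lam ^ (k + 1) / fact (k + 1) *
        measure M {\<omega> \<in> space M. (\<Sum>i<k + 1. X i \<omega>) > u + b})
     \<le> (2 / prob {\<omega>\<in>space M. X 0 \<omega> > b}) / (lam * real k)"
      by (rule quotient_bound_at_index[OF assms(2,3,4,10,5,7,8,9,11,12) c0 k])
  qed
qed

end
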